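(* Let $p$ be an odd prime, $d\ge2$ an integer with $p\nmid d$, and $\overline{\mathbb{F}_p}$ an algebraic closure of $\mathbb{F}_p$. Let $\zeta_1,\dots,\zeta_{\phi(d)}$ be the primitive $d$-th roots of unity in $\overline{\mathbb{F}_p}$, and let $C$ be the $\phi(d)\times d$ matrix whose $c$-th row is $(1,\zeta_c,\zeta_c^2,\dots,\zeta_c^{d-1})$. Let $\chi_1,\dots,\chi_n$ be Dirichlet characters of conductor $d$, with values in $K=\mathbb{Q}_p(\chi_1,\dots,\chi_n)$; let $\pi$ be a prime of the valuation ring $\mathcal{O}_K$, and regard each $\chi_i$, after reduction modulo $\pi$, as a function $\mathbb{Z}/d\mathbb{Z}\to\mathbb{F}_q=\mathcal{O}_K/\pi\subseteq\overline{\mathbb{F}_p}$ (with $\chi_i(h)=0$ when $\gcd(h,d)>1$). Assume the $\chi_i$ are pairwise distinct modulo $\pi$, i.e. for $i\ne i'$ there is $a\in(\mathbb{Z}/d\mathbb{Z})^*$ with $\chi_i(a)\not\equiv\chi_{i'}(a)\pmod{\pi}$. Let $E$ be the $d\times n$ matrix with entry $\chi_i(h)$ in row $h$ ($h=0,\dots,d-1$) and column $i$, and let $B=CE$. Then: 1. $C$ has rank $\phi(d)$; 2. the set $\{(1,\zeta,\dots,\zeta^{d-1}):\ \zeta\in\overline{\mathbb{F}_p},\ \zeta^d=1,\ \zeta\text{ not a primitive }d\text{-th root of unity}\}$ is a basis of $\ker(C)\subseteq\overline{\mathbb{F}_p}^{\,d}$; 3. $\ker(B)=\{(0,\dots,0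)\}$.
   Context: $\phi$ denotes Euler's totient function. Matrices act on column vectors over $\overline{\mathbb{F}_p}$. *)

theory Defs
  imports "Berlekamp_Zassenhaus.Finite_Field"
          "HOL-Algebra.Algebraic_Closure_Type"
          "Jordan_Normal_Form.Matrix_Kernel"
          "Jordan_Normal_Form.DL_Rank"
          "HOL-Number_Theory.Number_Theory"
begin

text \<open>Algebraic closure of F_p: the type 'p mod_ring is F_p (CARD('p) = p prime),
  and 'p mod_ring alg_closure is its algebraic closure.\<close>

definition prim_root_unity :: "nat \<Rightarrow> 'a :: comm_ring_1 \<Rightarrow> bool" where
  "prim_root_unity d z \<longleftrightarrow> z ^ d = 1 \<and> (\<forall>k. 0 < k \<and> k < d \<longrightarrow> z ^ k \<noteq> 1)"

text \<open>Dirichlet character modulo d (as a function on the naturals, i.e. on Z/dZ via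
  periodicity), with values in a commutative ring; vanishes off the units.\<close>
definition dirichlet_char :: "nat \<Rightarrow> (nat \<Rightarrow> 'a :: comm_ring_1) \<Rightarrow> bool" where
  "dirichlet_char d \<chi> \<longleftrightarrow>
     (\<forall>a. \<chi> (a + d) = \<chi> a) \<and> \<chi> 1 = 1 \<and> (\<forall>a b. \<chi> (a * b) = \<chi> a * \<chi> b) \<and>
     (\<forall>a. \<not> coprime a d \<longrightarrow> \<chi> a = 0)"

definition induced_mod :: "nat \<Rightarrow> nat \<Rightarrow> (nat \<Rightarrow> 'a :: comm_ring_1) \<Rightarrow> bool" where
  "induced_mod d e \<chi> \<longleftrightarrow> (\<forall>a. coprime a d \<longrightarrow> [a = 1] (mod e) \<longrightarrow> \<chi> a = 1)"

definition conductor :: "nat \<Rightarrow> (nat \<Rightarrow> 'a :: comm_ring_1) \<Rightarrow> nat" where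
  "conductor d \<chi> = (LEAST e. 0 < e \<and> e dvd d \<and> induced_mod d e \<chi>)"

end

theory Submission
  imports Defs
begin

text \<open>Since \<open>d\<close> is invertible in the algebraic closure of \<open>\<int>/p\<close>, there is a primitive
  \<open>d\<close>-th root of unity \<open>z\<close>, the \<open>d\<close>-th roots of unity are the \<open>d\<close> distinct powers of \<open>z\<close>, and
  the orthogonality relation
  \<open>\<Sum>\<^sub>h (u/v)\<^sup>h = d [u = v]\<close> makes the discrete Fourier transform of length \<open>d\<close> invertible.
  Hence the rows of \<open>C\<close> are independent, and \<open>x \<in> ker C\<close> iff the Fourier transform of \<open>x\<close> vanishes
  at the (inverse) primitive roots, i.e. iff \<open>x\<close> is a combination of the power vectors of the
  non-primitive roots, which are independent by orthogonality.

  Row \<open>c\<close> of \<open>B x\<close> is \<open>\<Sum>\<^sub>i x\<^sub>i G(\<chi>\<^sub>i, \<zeta>\<^sub>c)\<close> with the Gauss sum \<open>G(\<chi>, \<zeta>) = \<Sum>\<^sub>h \<chi>(h) \<zeta>\<^sup>h\<close>. Writing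
  \<open>\<zeta>\<^sub>c = z\<^sup>b\<close> with \<open>b\<close> inverse to a unit \<open>u\<close> gives \<open>G(\<chi>\<^sub>i, \<zeta>\<^sub>c) = \<chi>\<^sub>i(u) G(\<chi>\<^sub>i, z)\<close>, so \<open>B x = 0\<close> is a
  linear relation \<open>\<Sum>\<^sub>i x\<^sub>i G(\<chi>\<^sub>i, z) \<chi>\<^sub>i(u) = 0\<close> among the characters, which are distinct modulo
  \<open>\<pi>\<close>; by Artin's independence of characters \<open>x\<^sub>i G(\<chi>\<^sub>i, z) = 0\<close>. Finally \<open>G(\<chi>\<^sub>i, z) \<noteq> 0\<close>: since
  \<open>\<chi>\<^sub>i\<close> is primitive, \<open>G(\<chi>\<^sub>i, z\<^sup>b) = 0\<close> for \<open>b\<close> not prime to \<open>d\<close>, so if also \<open>G(\<chi>\<^sub>i, z) = 0\<close> all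
  \<open>G(\<chi>\<^sub>i, z\<^sup>b)\<close> would vanish, contradicting Fourier inversion, which recovers \<open>d \<chi>\<^sub>i(1) = d\<close>.\<close>

section \<open>Roots of unity\<close>

lemma power_gcd_eq_1:
  fixes z :: "'a::comm_monoid_mult"
  assumes "z ^ a = 1" "z ^ b = 1"
  shows "z ^ gcd a b = 1"
proof (cases "a = 0")
  case False
  then obtain x y where xy: "a * x = b * y + gcd a b"
    using bezout_nat by blast
  have "1 = z ^ (a * x)"
    using assms by (simp add: power_mult)
  also have "\<dots> = z ^ gcd a b"
    using assms by (simp add: xy power_add power_mult)
  finally show ?thesis by simp
qed (use assms in simp)

lemma prim_root_unity_iff:
  fixes z :: "'a::comm_ring_1"
  assumes "0 < d"
  shows "prim_root_unity d z \<longleftrightarrow> (\<forall>j. z ^ j = 1 \<longleftrightarrow> d dvd j)"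
proof
  assume prim: "prim_root_unity d z"
  show "\<forall>j. z ^ j = 1 \<longleftrightarrow> d dvd j"
  proof (intro allI iffI)
    fix j
    assume "z ^ j = 1"
    then have "z ^ gcd j d = 1"
      using prim power_gcd_eq_1 unfolding prim_root_unity_def by blast
    moreover have "0 < gcd j d" "gcd j d \<le> d"
      using assms by (simp_all add: gcd_le2_nat)
    ultimately have "gcd j d = d"
      using prim unfolding prim_root_unity_def by (meson le_neq_implies_less)
    then show "d dvd j"
      using gcd_dvd1[of j d] by simp
  next
    fix j
    assume "d dvd j"
    then show "z ^ j = 1"
      using prim unfolding prim_root_unity_def by (auto simp: power_mult)
  qed
next
  assume "\<forall>j. z ^ j = 1 \<longleftrightarrow> d dvd j"
  then show "prim_root_unity d z"
    unfolding prim_root_unity_def by (auto simp: nat_dvd_not_less)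
qed

lemma prim_root_unity_pow_eq_1_iff:
  fixes z :: "'a::comm_ring_1"
  assumes "prim_root_unity d z" and "0 < d"
  shows "z ^ j = 1 \<longleftrightarrow> d dvd j"
  using assms prim_root_unity_iff by blast

lemma prim_root_unity_mult_coprime:
  fixes x y :: "'a::comm_ring_1"
  assumes x: "prim_root_unity a x" and y: "prim_root_unity b y"
    and pos: "0 < a" "0 < b" and coprime: "coprime a b"
  shows "prim_root_unity (a * b) (x * y)"
proof -
  have x_iff: "x ^ j = 1 \<longleftrightarrow> a dvd j" and y_iff: "y ^ j = 1 \<longleftrightarrow> b dvd j" for j
    using x y pos prim_root_unity_pow_eq_1_iff by blast+
  have "(x * y) ^ j = 1 \<longleftrightarrow> a * b dvd j" for j
  proof
    assume xy: "(x * y) ^ j = 1"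
    have "x ^ (j * b) = (x * y) ^ (j * b)"
      using y_iff[of "j * b"] by (simp add: power_mult_distrib)
    also have "\<dots> = 1"
      using xy by (simp add: power_mult)
    finally have "a dvd j * b"
      using x_iff by blast
    then have "a dvd j"
      using coprime by (simp add: coprime_dvd_mult_left_iff)
    have "y ^ (j * a) = (x * y) ^ (j * a)"
      using x_iff[of "j * a"] by (simp add: power_mult_distrib)
    also have "\<dots> = 1"
      using xy by (simp add: power_mult)
    finally have "b dvd j * a"
      using y_iff by blast
    then have "b dvd j"
      using coprime by (simp add: coprime_commute coprime_dvd_mult_left_iff)
    with \<open>a dvd j\<close> show "a * b dvd j"
      using coprime by (simp add: divides_mult)
  next
    assume "a * b dvd j"
    then have "a dvd j" "b dvd j"
      by (auto intro: dvd_mult_left dvd_mult_right)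
    then have "x ^ j = 1" "y ^ j = 1"
      using x_iff y_iff by blast+
    then show "(x * y) ^ j = 1"
      by (simp add: power_mult_distrib)
  qed
  then show ?thesis
    using pos by (simp add: prim_root_unity_iff)
qed

lemma prim_root_unity_nth_root:
  fixes y z :: "'a::comm_ring_1"
  assumes y: "prim_root_unity m y" and "0 < m" and q: "Factorial_Ring.prime q" "q dvd m"
    and z: "z ^ q = y"
  shows "prim_root_unity (q * m) z"
proof -
  obtain r where m: "m = q * r"
    using q(2) by blast
  have "1 < q"
    using q(1) prime_gt_1_nat by blast
  then have r: "0 < r" "r < m"
    using m \<open>0 < m\<close> by auto
  have y_iff: "y ^ j = 1 \<longleftrightarrow> m dvd j" for j
    using y \<open>0 < m\<close> prim_root_unity_pow_eq_1_iff by blast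
  have z_qm: "z ^ (q * m) = 1"
    using y_iff[of m] z by (simp add: power_mult)
  have "z ^ j = 1 \<longleftrightarrow> q * m dvd j" for j
  proof
    assume zj: "z ^ j = 1"
    have "y ^ j = (z ^ j) ^ q"
      unfolding z[symmetric] by (simp flip: power_mult add: mult.commute)
    then obtain t where t: "j = m * t"
      using zj y_iff by auto
    have "q dvd t"
    proof (rule ccontr)
      assume "\<not> q dvd t"
      then have "coprime t q"
        using q(1) by (simp add: prime_imp_coprime coprime_commute)
      moreover have "(z ^ m) ^ t = 1" "(z ^ m) ^ q = 1"
        using zj z_qm t by (simp_all add: power_mult mult.commute)
      ultimately have "z ^ m = 1"
        using power_gcd_eq_1[of "z ^ m" t q] by simp
      then have "y ^ r = 1"
        using z m by (simp add: power_mult)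
      then show False
        using y_iff r by (auto dest: dvd_imp_le)
    qed
    then show "q * m dvd j"
      using t by (simp add: mult.commute)
  next
    assume "q * m dvd j"
    then show "z ^ j = 1"
      using z_qm by (auto simp: power_mult)
  qed
  then show ?thesis
    using \<open>0 < m\<close> \<open>1 < q\<close> by (simp add: prim_root_unity_iff)
qed

lemma exists_prim_root_unity_prime:
  assumes q: "Factorial_Ring.prime q" and q_nonzero: "(of_nat q :: 'a::alg_closed_field) \<noteq> 0"
  shows "\<exists>z::'a. prim_root_unity q z"
proof -
  have "0 < q"
    using q prime_gt_0_nat by blast
  have "\<exists>x::'a. (\<Sum>k\<le>q - 1. 1 * x ^ k) = 0"
    by (rule alg_closed) (use q prime_gt_1_nat in auto)
  then obtain x :: 'a where x: "(\<Sum>k<q. x ^ k) = 0"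
    using \<open>0 < q\<close> by (auto simp flip: lessThan_Suc_atMost)
  have "x ^ q = 1"
    using x power_diff_1_eq[of x q] by simp
  moreover have "x \<noteq> 1"
    using x q_nonzero by auto
  moreover have "x ^ k \<noteq> 1" if "0 < k" "k < q" for k
  proof
    assume "x ^ k = 1"
    have "\<not> q dvd k"
      using that by (auto dest: dvd_imp_le)
    then have "coprime k q"
      using prime_imp_coprime[OF q] by (simp add: coprime_commute)
    then show False
      using power_gcd_eq_1[OF \<open>x ^ k = 1\<close> \<open>x ^ q = 1\<close>] \<open>x \<noteq> 1\<close> by simp
  qed
  ultimately show ?thesis
    unfolding prim_root_unity_def by blast
qed

lemma exists_prim_root_unity:
  assumes "0 < d" and "(of_nat d :: 'a::alg_closed_field) \<noteq> 0"
  shows "\<exists>z::'a. prim_root_unity d z"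
  using assms
proof (induction d rule: less_induct)
  case (less d)
  show ?case
  proof (cases "d = 1")
    case True
    then show ?thesis
      by (auto simp: prim_root_unity_def)
  next
    case False
    then obtain q where q: "Factorial_Ring.prime q" "q dvd d"
      using prime_factor_nat by blast
    obtain m where d: "d = q * m"
      using q(2) by blast
    have "1 < q"
      using q(1) prime_gt_1_nat by blast
    then have m: "0 < m" "m < d"
      using d less.prems(1) by auto
    have "(of_nat m :: 'a) \<noteq> 0" "(of_nat q :: 'a) \<noteq> 0"
      using less.prems(2) d by auto
    then obtain y :: 'a where y: "prim_root_unity m y"
      using less.IH m by blast
    show ?thesis
    proof (cases "q dvd m")
      case True
      obtain z :: 'a where "z ^ q = y"
        using nth_root_exists[of q y] \<open>1 < q\<close> by auto
      then show ?thesis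
        using prim_root_unity_nth_root[OF y m(1) q(1) True] d by blast
    next
      case False
      then have "coprime q m"
        using q(1) by (simp add: prime_imp_coprime)
      moreover obtain x :: 'a where "prim_root_unity q x"
        using exists_prim_root_unity_prime q(1) \<open>of_nat q \<noteq> 0\<close> by blast
      ultimately show ?thesis
        using prim_root_unity_mult_coprime[OF _ y _ m(1)] \<open>1 < q\<close> d by auto
    qed
  qed
qed

lemma prim_root_unity_pow_inj:
  fixes z :: "'a::idom"
  assumes z: "prim_root_unity d z" and "0 < d"
  shows "inj_on (\<lambda>j. z ^ j) {..<d}"
proof -
  have "z \<noteq> 0"
    using z \<open>0 < d\<close> unfolding prim_root_unity_def by (auto simp: power_0_left)
  have ordered: "i = j" if "i \<le> j" "j < d" "z ^ i = z ^ j" for i j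
  proof -
    have "z ^ i * z ^ (j - i) = z ^ j"
      using that(1) by (simp flip: power_add)
    then have "z ^ i * z ^ (j - i) = z ^ i * 1"
      using that(3) by simp
    then have "z ^ (j - i) = 1"
      using \<open>z \<noteq> 0\<close> by simp
    then have "d dvd j - i"
      using z \<open>0 < d\<close> prim_root_unity_pow_eq_1_iff by blast
    then show "i = j"
      using that(1,2) by (auto dest: dvd_imp_le)
  qed
  show ?thesis
  proof (rule inj_onI)
    fix i j
    assume "i \<in> {..<d}" "j \<in> {..<d}" and eq: "z ^ i = z ^ j"
    then have "i < d" "j < d"
      by simp_all
    show "i = j"
    proof (cases "i \<le> j")
      case True
      show ?thesis
        using ordered[OF True \<open>j < d\<close> eq] .
    next
      case False
      then have "j \<le> i"
        by simp
      then show ?thesis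
        using ordered[OF \<open>j \<le> i\<close> \<open>i < d\<close> eq[symmetric]] by simp
    qed
  qed
qed

lemma card_roots_unity_le:
  assumes "0 < d"
  shows "finite {w::'a::idom. w ^ d = 1}" "card {w::'a::idom. w ^ d = 1} \<le> d"
proof -
  define p :: "'a poly" where "p = monom 1 d - 1"
  have roots: "{w::'a. w ^ d = 1} = {w. poly p w = 0}"
    by (simp add: p_def poly_monom)
  have "poly p 0 = -1"
    using assms by (simp add: p_def poly_monom)
  then have "p \<noteq> 0"
    by auto
  moreover have "Polynomial.degree p \<le> d"
    unfolding p_def by (rule order.trans[OF degree_diff_le_max]) (auto simp: degree_monom_le)
  ultimately show "finite {w::'a. w ^ d = 1}" "card {w::'a. w ^ d = 1} \<le> d"
    unfolding roots using poly_roots_finite[OF \<open>p \<noteq> 0\<close>] card_poly_roots_bound[OF \<open>p \<noteq> 0\<close>]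
    by simp_all
qed

lemma roots_unity_eq_powers:
  fixes z :: "'a::idom"
  assumes z: "prim_root_unity d z" and "0 < d"
  shows "{w. w ^ d = 1} = (\<lambda>j. z ^ j) ` {..<d}"
proof -
  have "(z ^ j) ^ d = (z ^ d) ^ j" for j
    by (simp flip: power_mult add: mult.commute)
  then have powers_roots: "(\<lambda>j. z ^ j) ` {..<d} \<subseteq> {w. w ^ d = 1}"
    using z unfolding prim_root_unity_def by auto
  have "card ((\<lambda>j. z ^ j) ` {..<d}) = d"
    using card_image[OF prim_root_unity_pow_inj[OF assms]] by simp
  moreover have "card ((\<lambda>j. z ^ j) ` {..<d}) \<le> card {w::'a. w ^ d = 1}"
    using card_mono[OF card_roots_unity_le(1)[OF \<open>0 < d\<close>] powers_roots] .
  ultimately have "card ((\<lambda>j. z ^ j) ` {..<d}) = card {w::'a. w ^ d = 1}"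
    using card_roots_unity_le(2)[OF \<open>0 < d\<close>, where 'a='a] by linarith
  then show ?thesis
    using card_subset_eq[OF card_roots_unity_le(1)[OF \<open>0 < d\<close>] powers_roots] by simp
qed

lemma prim_root_unity_power_iff:
  fixes z :: "'a::comm_ring_1"
  assumes z: "prim_root_unity d z" and "0 < d"
  shows "prim_root_unity d (z ^ j) \<longleftrightarrow> coprime j d"
proof
  assume "coprime j d"
  have "(z ^ j) ^ k = 1 \<longleftrightarrow> d dvd k" for k
  proof -
    have "(z ^ j) ^ k = 1 \<longleftrightarrow> d dvd j * k"
      using z \<open>0 < d\<close> by (simp add: prim_root_unity_pow_eq_1_iff flip: power_mult)
    also have "\<dots> \<longleftrightarrow> d dvd k"
      using \<open>coprime j d\<close> by (simp add: coprime_commute coprime_dvd_mult_right_iff)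
    finally show ?thesis .
  qed
  then show "prim_root_unity d (z ^ j)"
    using \<open>0 < d\<close> by (simp add: prim_root_unity_iff)
next
  assume prim: "prim_root_unity d (z ^ j)"
  define g where "g = gcd j d"
  define e where "e = d div g"
  have "0 < g" "g dvd j" "g dvd d"
    using \<open>0 < d\<close> by (simp_all add: g_def)
  then have d: "d = g * e"
    by (simp add: e_def)
  obtain j' where j: "j = g * j'"
    using \<open>g dvd j\<close> by blast
  have "j * e = d * j'"
    by (simp add: d j mult_ac)
  then have "(z ^ j) ^ e = 1"
    using z \<open>0 < d\<close> by (simp add: prim_root_unity_pow_eq_1_iff flip: power_mult)
  then have "d dvd e"
    using prim \<open>0 < d\<close> prim_root_unity_pow_eq_1_iff by blast
  moreover have "0 < e"
    using \<open>0 < d\<close> unfolding d by simp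
  ultimately have "d \<le> e"
    by (rule dvd_imp_le)
  then have "g * e \<le> 1 * e"
    unfolding d by simp
  then have "g \<le> 1"
    using mult_le_cancel2[of g e 1] \<open>0 < e\<close> by simp
  then have "g = 1"
    using \<open>0 < g\<close> by linarith
  then show "coprime j d"
    unfolding g_def using coprime_iff_gcd_eq_1 by blast
qed

lemma prim_root_unity_inverse:
  fixes \<zeta> w :: "'a::idom"
  assumes \<zeta>: "prim_root_unity d \<zeta>" and "0 < d" and "\<zeta> * w = 1"
  shows "prim_root_unity d w"
proof -
  have "\<zeta> * \<zeta> ^ (d - 1) = 1"
    using \<zeta> \<open>0 < d\<close> unfolding prim_root_unity_def by (simp flip: power_Suc)
  then have "\<zeta> * w = \<zeta> * \<zeta> ^ (d - 1)"
    using \<open>\<zeta> * w = 1\<close> by simp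
  moreover have "\<zeta> \<noteq> 0"
    using \<open>\<zeta> * w = 1\<close> by auto
  ultimately have "w = \<zeta> ^ (d - 1)"
    by simp
  then show ?thesis
    using prim_root_unity_power_iff[OF \<zeta> \<open>0 < d\<close>] coprime_diff_one_left_nat[OF \<open>0 < d\<close>] by simp
qed

lemma card_coprime_less_eq_totient:
  assumes "0 < d"
  shows "card {j. j < d \<and> coprime j d} = totient d"
proof (cases "d = 1")
  case True
  then have "{j. j < d \<and> coprime j d} = {0}"
    by auto
  then show ?thesis
    using True by simp
next
  case False
  have "{j. j < d \<and> coprime j d} = totatives d"
  proof (intro equalityI subsetI)
    fix j
    assume j: "j \<in> {j. j < d \<and> coprime j d}"
    have "j \<noteq> 0"
    proof
      assume "j = 0"
      with j False show False
        by simp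
    qed
    with j show "j \<in> totatives d"
      by (auto simp: totatives_def)
  next
    fix j
    assume j: "j \<in> totatives d"
    then have "j \<noteq> d"
      using False by (auto simp: totatives_def)
    with j show "j \<in> {j. j < d \<and> coprime j d}"
      by (auto simp: totatives_def)
  qed
  then show ?thesis
    by (simp add: totient_def)
qed

lemma card_prim_roots_unity:
  fixes z :: "'a::idom"
  assumes z: "prim_root_unity d z" and "0 < d"
  shows "card {w::'a. prim_root_unity d w} = totient d"
proof -
  let ?U = "{j. j < d \<and> coprime j d}"
  have prim_iff: "prim_root_unity d (z ^ j) \<longleftrightarrow> coprime j d" for j
    using prim_root_unity_power_iff[OF z \<open>0 < d\<close>] .
  have prim_roots: "{w. prim_root_unity d w} = (\<lambda>j. z ^ j) ` ?U"
  proof (intro equalityI subsetI)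
    fix w :: 'a
    assume "w \<in> {w. prim_root_unity d w}"
    then have w: "prim_root_unity d w"
      by simp
    then have "w \<in> {w. w ^ d = 1}"
      unfolding prim_root_unity_def by simp
    then obtain j where "j < d" "w = z ^ j"
      unfolding roots_unity_eq_powers[OF z \<open>0 < d\<close>] by auto
    then show "w \<in> (\<lambda>j. z ^ j) ` ?U"
      using w prim_iff by auto
  qed (use prim_iff in auto)
  have "inj_on (\<lambda>j. z ^ j) ?U"
    using prim_root_unity_pow_inj[OF z \<open>0 < d\<close>] by (rule inj_on_subset) auto
  show ?thesis
    unfolding prim_roots card_image[OF \<open>inj_on (\<lambda>j. z ^ j) ?U\<close>]
    by (rule card_coprime_less_eq_totient[OF \<open>0 < d\<close>])
qed

lemma power_mod_root_unity:
  fixes z :: "'a::monoid_mult"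
  assumes "z ^ d = 1"
  shows "z ^ (n mod d) = z ^ n"
proof -
  have "z ^ n = z ^ (d * (n div d) + n mod d)"
    by (simp only: mult_div_mod_eq)
  also have "\<dots> = (z ^ d) ^ (n div d) * z ^ (n mod d)"
    by (simp only: power_add power_mult)
  finally show ?thesis
    using assms by simp
qed

lemma power_mult_power_power:
  fixes u w :: "'a::comm_monoid_mult"
  shows "u ^ h * (w ^ h) ^ m = (u * w ^ m) ^ h"
  by (simp add: power_mult_distrib flip: power_mult) (simp add: mult.commute)

lemma sum_powers_root_unity:
  fixes w :: "'a::idom"
  assumes "w ^ d = 1"
  shows "(\<Sum>h<d. w ^ h) = (if w = 1 then of_nat d else 0)"
  using assms power_diff_1_eq[of w d] by auto

lemma mult_power_pred_eq_1_iff: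
  fixes u v :: "'a::idom"
  assumes "v ^ d = 1" and "0 < d"
  shows "u * v ^ (d - 1) = 1 \<longleftrightarrow> u = v"
proof -
  have v: "v * v ^ (d - 1) = 1"
    using assms by (simp flip: power_Suc)
  then have "v ^ (d - 1) \<noteq> 0"
    by auto
  show ?thesis
  proof
    assume "u * v ^ (d - 1) = 1"
    then have "u * v ^ (d - 1) = v * v ^ (d - 1)"
      using v by simp
    then show "u = v"
      using mult_right_cancel[OF \<open>v ^ (d - 1) \<noteq> 0\<close>] by blast
  qed (use v in simp)
qed

lemma sum_powers_quotient_roots_unity:
  fixes u v :: "'a::idom"
  assumes "u ^ d = 1" "v ^ d = 1" and "0 < d"
  shows "(\<Sum>h<d. (u * v ^ (d - 1)) ^ h) = (if u = v then of_nat d else 0)"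
proof -
  have "(u * v ^ (d - 1)) ^ d = u ^ d * (v ^ d) ^ (d - 1)"
    by (simp add: power_mult_distrib flip: power_mult) (simp add: mult.commute)
  then have "(u * v ^ (d - 1)) ^ d = 1"
    using assms by simp
  then have "(\<Sum>h<d. (u * v ^ (d - 1)) ^ h) = (if u * v ^ (d - 1) = 1 then of_nat d else 0)"
    by (rule sum_powers_root_unity)
  then show ?thesis
    using mult_power_pred_eq_1_iff[OF assms(2,3), of u] by simp
qed

lemma sum_powers_prim_root_unity_orthogonal:
  fixes z :: "'a::idom"
  assumes z: "prim_root_unity d z" and "0 < d" "k < d" "h < d"
  shows "(\<Sum>j<d. (z ^ j) ^ k * ((z ^ j) ^ h) ^ (d - 1)) = (if k = h then of_nat d else 0)"
proof -
  have "(z ^ i) ^ d = (z ^ d) ^ i" for i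
    by (simp flip: power_mult add: mult.commute)
  then have root: "(z ^ i) ^ d = 1" for i
    using z unfolding prim_root_unity_def by simp
  have "(z ^ j) ^ k * ((z ^ j) ^ h) ^ (d - 1) = (z ^ k * (z ^ h) ^ (d - 1)) ^ j" for j
    by (simp add: power_mult_distrib flip: power_mult) (simp add: ac_simps)
  then have "(\<Sum>j<d. (z ^ j) ^ k * ((z ^ j) ^ h) ^ (d - 1)) = (if z ^ k = z ^ h then of_nat d else 0)"
    using sum_powers_quotient_roots_unity[OF root root \<open>0 < d\<close>] by simp
  also have "z ^ k = z ^ h \<longleftrightarrow> k = h"
    using prim_root_unity_pow_inj[OF z \<open>0 < d\<close>] assms(3,4) by (auto dest: inj_onD)
  finally show ?thesis .
qed

text \<open>For a root of unity \<open>w\<close>, \<open>w ^ (n - 1)\<close> is \<open>w\<inverse>\<close>: the inner sum is the discrete Fourier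
  transform of \<open>x\<close> at \<open>w\<inverse>\<close>.\<close>
lemma fourier_inversion_roots_unity:
  fixes x :: "nat \<Rightarrow> 'a::field" and z :: 'a
  assumes z: "prim_root_unity n z" and "0 < n" and n_nonzero: "of_nat n \<noteq> (0::'a)"
    and "h < n"
  shows "(\<Sum>w | w ^ n = 1. inverse (of_nat n) * (\<Sum>k<n. x k * (w ^ k) ^ (n - 1)) * w ^ h) = x h"
proof -
  have "(\<Sum>w | w ^ n = 1. inverse (of_nat n) * (\<Sum>k<n. x k * (w ^ k) ^ (n - 1)) * w ^ h)
      = (\<Sum>j<n. inverse (of_nat n) * (\<Sum>k<n. x k * ((z ^ j) ^ k) ^ (n - 1)) * (z ^ j) ^ h)"
    unfolding roots_unity_eq_powers[OF z \<open>0 < n\<close>]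
    by (simp add: sum.reindex[OF prim_root_unity_pow_inj[OF z \<open>0 < n\<close>]])
  also have "\<dots> = inverse (of_nat n) * (\<Sum>k<n. x k * (\<Sum>j<n. (z ^ j) ^ h * ((z ^ j) ^ k) ^ (n - 1)))"
    unfolding sum_distrib_left sum_distrib_right by (subst sum.swap) (simp add: ac_simps)
  also have "\<dots> = inverse (of_nat n) * (\<Sum>k<n. x k * (if h = k then of_nat n else 0))"
    using sum_powers_prim_root_unity_orthogonal[OF z \<open>0 < n\<close> \<open>h < n\<close>] by simp
  also have "\<dots> = x h"
    using \<open>h < n\<close> n_nonzero by (simp add: if_distrib sum.delta cong: if_cong)
  finally show ?thesis .
qed

section \<open>Dirichlet characters and Gauss sums\<close>

lemma comm_ring_homI:
  fixes f :: "'a::comm_ring_1 \<Rightarrow> 'b::comm_ring_1"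
  assumes "f 1 = 1" "\<And>x y. f (x + y) = f x + f y" "\<And>x y. f (x * y) = f x * f y"
  shows "comm_ring_hom f"
proof -
  have "f 0 + f 0 = f 0 + 0"
    using assms(2)[of 0 0] by simp
  then have "f 0 = 0"
    by (rule add_left_imp_eq)
  then show ?thesis
    by unfold_locales (simp_all add: assms)
qed

lemma dirichlet_charD:
  assumes "dirichlet_char d \<chi>"
  shows "\<chi> (a + d) = \<chi> a" "\<chi> 1 = 1" "\<chi> (a * b) = \<chi> a * \<chi> b"
    and "\<not> coprime a d \<Longrightarrow> \<chi> a = 0"
  using assms unfolding dirichlet_char_def by blast+

lemma dirichlet_char_mod:
  assumes \<chi>: "dirichlet_char d \<chi>"
  shows "\<chi> (x mod d) = \<chi> x"
proof -
  have "\<chi> (y + d * k) = \<chi> y" for y k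
  proof (induction k)
    case (Suc k)
    have "\<chi> (y + d * Suc k) = \<chi> ((y + d * k) + d)"
      by (simp add: algebra_simps)
    then show ?case
      using dirichlet_charD(1)[OF \<chi>] Suc.IH by simp
  qed simp
  from this[of "x mod d" "x div d"] show ?thesis
    by simp
qed

lemma dirichlet_char_comp_hom:
  assumes "dirichlet_char d \<chi>" and "comm_ring_hom red"
  shows "dirichlet_char d (red \<circ> \<chi>)"
proof -
  interpret comm_ring_hom red by fact
  show ?thesis
    unfolding dirichlet_char_def o_def
    by (intro conjI allI impI)
      (simp_all only: dirichlet_charD(1-3)[OF assms(1)] hom_one hom_mult,
        simp add: dirichlet_charD(4)[OF assms(1)])
qed

lemma bij_betw_mult_mod:
  fixes a d :: nat
  assumes "coprime a d"
  shows "bij_betw (\<lambda>h. a * h mod d) {..<d} {..<d}"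
proof -
  have "inj_on (\<lambda>h. a * h mod d) {..<d}"
  proof (rule inj_onI)
    fix h h'
    assume "h \<in> {..<d}" "h' \<in> {..<d}" "a * h mod d = a * h' mod d"
    then have "[h = h'] (mod d)" "h < d" "h' < d"
      using cong_mult_lcancel_nat[OF assms] by (auto simp: cong_def)
    then show "h = h'"
      by (rule cong_less_modulus_unique_nat)
  qed
  moreover have "(\<lambda>h. a * h mod d) ` {..<d} \<subseteq> {..<d}"
    by auto
  ultimately show ?thesis
    using endo_inj_surj[of "{..<d}"] by (simp add: bij_betw_def)
qed

lemma not_induced_mod_below_conductor:
  assumes "0 < e" "e dvd d" "e < conductor d \<chi>"
  shows "\<not> induced_mod d e \<chi>"
proof
  assume "induced_mod d e \<chi>"
  then have "conductor d \<chi> \<le> e"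
    unfolding conductor_def using assms(1,2) by (intro Least_le) simp
  then show False
    using assms(3) by simp
qed

text \<open>The fibres are stable under multiplication by a unit \<open>a \<equiv> 1 (mod d div gcd b d)\<close> with
  \<open>\<chi> a \<noteq> 1\<close>, which exists by primitivity.\<close>
lemma sum_fibre_primitive_char_eq_0:
  fixes \<chi> :: "nat \<Rightarrow> 'a::idom"
  assumes \<chi>: "dirichlet_char d \<chi>" and prim: "conductor d \<chi> = d" and "0 < d"
    and b: "\<not> coprime b d"
  shows "(\<Sum>h | h < d \<and> b * h mod d = k. \<chi> h) = 0"
proof -
  define g where "g = gcd b d"
  define e where "e = d div g"
  have "g dvd b" "g dvd d" "0 < g"
    using \<open>0 < d\<close> by (simp_all add: g_def)
  moreover have "g \<noteq> 1"
    using b coprime_iff_gcd_eq_1 unfolding g_def by blast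
  ultimately have "1 < g" "d = g * e"
    by (linarith, simp add: e_def)
  then have "0 < e" "e < d" "e dvd d"
    using \<open>0 < d\<close> by auto
  then obtain a where a: "coprime a d" "[a = 1] (mod e)" "\<chi> a \<noteq> 1"
    using not_induced_mod_below_conductor[of e d \<chi>] prim unfolding induced_mod_def by auto
  have "d dvd b * e"
    using mult_dvd_mono[OF \<open>g dvd b\<close> dvd_refl[of e]] \<open>d = g * e\<close> by simp
  with cong_cmult_leftI[OF a(2), of b] have "[b * a = b * 1] (mod d)"
    by (rule cong_dvd_modulus_nat)
  then have ba: "b * a mod d = b mod d"
    by (simp add: cong_def)
  define S where "S = {h. h < d \<and> b * h mod d = k}"
  define \<sigma> where "\<sigma> h = a * h mod d" for h
  have "b * \<sigma> h mod d = b * h mod d" for h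
  proof -
    have "b * \<sigma> h mod d = (b * a mod d) * h mod d"
      unfolding \<sigma>_def by (simp add: mod_mult_right_eq mod_mult_left_eq mult.assoc)
    then show ?thesis
      using ba by (simp add: mod_mult_left_eq)
  qed
  then have "\<sigma> ` S \<subseteq> S"
    using \<open>0 < d\<close> unfolding S_def \<sigma>_def by auto
  moreover have "inj_on \<sigma> S"
    using bij_betw_imp_inj_on[OF bij_betw_mult_mod[OF a(1)]] unfolding S_def \<sigma>_def
    by (rule inj_on_subset) auto
  moreover have "finite S"
    unfolding S_def by simp
  ultimately have "bij_betw \<sigma> S S"
    using endo_inj_surj by (simp add: bij_betw_def)
  then have "(\<Sum>h\<in>S. \<chi> h) = (\<Sum>h\<in>S. \<chi> (\<sigma> h))"
    by (simp add: sum.reindex_bij_betw)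
  also have "\<dots> = \<chi> a * (\<Sum>h\<in>S. \<chi> h)"
    unfolding \<sigma>_def by (simp add: dirichlet_char_mod[OF \<chi>] dirichlet_charD(3)[OF \<chi>] sum_distrib_left)
  finally have "(1 - \<chi> a) * (\<Sum>h\<in>S. \<chi> h) = 0"
    by (simp add: algebra_simps)
  then show ?thesis
    using a(3) unfolding S_def by simp
qed

definition gauss_sum :: "nat \<Rightarrow> (nat \<Rightarrow> 'a::comm_semiring_1) \<Rightarrow> 'a \<Rightarrow> 'a" where
  "gauss_sum d \<psi> z = (\<Sum>h<d. \<psi> h * z ^ h)"

lemma gauss_sum_power_coprime:
  fixes \<psi> :: "nat \<Rightarrow> 'a::comm_ring_1"
  assumes \<psi>: "dirichlet_char d \<psi>" and ab: "[a * b = 1] (mod d)" and z: "z ^ d = 1"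
  shows "gauss_sum d \<psi> (z ^ b) = \<psi> a * gauss_sum d \<psi> z"
proof -
  have "coprime a d"
    using ab by (metis cong_imp_coprime cong_sym coprime_1_left coprime_mult_left_iff)
  define \<sigma> where "\<sigma> h = a * h mod d" for h
  have "z ^ (b * \<sigma> h) = z ^ h" for h
  proof -
    have "b * \<sigma> h mod d = (a * b) * h mod d"
      unfolding \<sigma>_def by (metis mod_mult_right_eq mult.assoc mult.commute)
    also have "\<dots> = h mod d"
      using ab unfolding cong_def by (metis mod_mult_left_eq mult_1)
    finally show ?thesis
      using power_mod_root_unity[OF z] by metis
  qed
  moreover have "\<psi> (\<sigma> h) = \<psi> a * \<psi> h" for h
    unfolding \<sigma>_def by (simp add: dirichlet_char_mod[OF \<psi>] dirichlet_charD(3)[OF \<psi>])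
  ultimately have "gauss_sum d \<psi> (z ^ b) = (\<Sum>h<d. \<psi> a * (\<psi> h * z ^ h))"
    unfolding gauss_sum_def
    using sum.reindex_bij_betw[OF bij_betw_mult_mod[OF \<open>coprime a d\<close>],
        of "\<lambda>h. \<psi> h * (z ^ b) ^ h", symmetric]
    by (simp add: \<sigma>_def power_mult[symmetric] ac_simps)
  then show ?thesis
    by (simp add: gauss_sum_def sum_distrib_left)
qed

lemma gauss_sum_power_eq_0:
  fixes \<psi> :: "nat \<Rightarrow> 'a::comm_semiring_1"
  assumes z: "z ^ d = 1" and fibres: "\<And>k. (\<Sum>h | h < d \<and> b * h mod d = k. \<psi> h) = 0"
  shows "gauss_sum d \<psi> (z ^ b) = 0"
proof -
  have "gauss_sum d \<psi> (z ^ b) = (\<Sum>h<d. \<psi> h * z ^ (b * h mod d))"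
    unfolding gauss_sum_def by (simp add: power_mod_root_unity[OF z] flip: power_mult)
  also have "\<dots> = (\<Sum>k\<in>(\<lambda>h. b * h mod d) ` {..<d}. \<Sum>h | h < d \<and> b * h mod d = k. \<psi> h * z ^ k)"
    by (subst sum.image_gen[of "{..<d}" _ "\<lambda>h. b * h mod d"]) (auto intro!: sum.cong)
  also have "\<dots> = 0"
    using fibres by (simp flip: sum_distrib_right)
  finally show ?thesis .
qed

lemma gauss_sum_nonzero:
  fixes \<psi> :: "nat \<Rightarrow> 'a::idom"
  assumes \<psi>: "dirichlet_char d \<psi>" and z: "prim_root_unity d z" and "1 < d"
    and d_nonzero: "of_nat d \<noteq> (0::'a)"
    and non_coprime: "\<And>b. \<not> coprime b d \<Longrightarrow> gauss_sum d \<psi> (z ^ b) = 0"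
  shows "gauss_sum d \<psi> z \<noteq> 0"
proof
  assume G: "gauss_sum d \<psi> z = 0"
  have "gauss_sum d \<psi> (z ^ b) = 0" for b
  proof (cases "coprime b d")
    case True
    then obtain a where "[a * b = 1] (mod d)"
      using cong_solve_coprime_nat by (metis One_nat_def mult.commute)
    then show ?thesis
      using gauss_sum_power_coprime[OF \<psi>] z G unfolding prim_root_unity_def by simp
  qed (use non_coprime in simp)
  then have "0 = (\<Sum>b<d. gauss_sum d \<psi> (z ^ b) * (z ^ b) ^ (d - 1))"
    by simp
  also have "\<dots> = (\<Sum>h<d. \<psi> h * (\<Sum>b<d. (z ^ b) ^ h * (z ^ b) ^ (d - 1)))"
    unfolding gauss_sum_def sum_distrib_left sum_distrib_right
    by (subst sum.swap) (simp add: ac_simps)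
  also have "\<dots> = (\<Sum>h<d. \<psi> h * (if h = 1 then of_nat d else 0))"
  proof (intro sum.cong refl)
    fix h
    assume "h \<in> {..<d}"
    then show "\<psi> h * (\<Sum>b<d. (z ^ b) ^ h * (z ^ b) ^ (d - 1)) = \<psi> h * (if h = 1 then of_nat d else 0)"
      using sum_powers_prim_root_unity_orthogonal[OF z _ _ \<open>1 < d\<close>, of h] by simp
  qed
  also have "\<dots> = of_nat d"
    using dirichlet_charD(2)[OF \<psi>] \<open>1 < d\<close> by (simp add: if_distrib sum.delta cong: if_cong)
  finally show False
    using d_nonzero by simp
qed

text \<open>The reduction of a primitive character need no longer be primitive, so the vanishing of
  the twisted Gauss sums is proved before reducing.\<close>
lemma gauss_sum_char_hom_nonzero:
  fixes \<chi> :: "nat \<Rightarrow> 'a::idom" and red :: "'a \<Rightarrow> 'b::idom"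
  assumes hom: "comm_ring_hom red" and \<chi>: "dirichlet_char d \<chi>" and prim: "conductor d \<chi> = d"
    and z: "prim_root_unity d z" and "1 < d" and d_nonzero: "of_nat d \<noteq> (0::'b)"
  shows "gauss_sum d (red \<circ> \<chi>) z \<noteq> 0"
proof (rule gauss_sum_nonzero[OF dirichlet_char_comp_hom[OF \<chi> hom] z \<open>1 < d\<close> d_nonzero])
  interpret comm_ring_hom red by fact
  fix b
  assume "\<not> coprime b d"
  have "(\<Sum>h | h < d \<and> b * h mod d = k. (red \<circ> \<chi>) h) = 0" for k
    using sum_fibre_primitive_char_eq_0[OF \<chi> prim _ \<open>\<not> coprime b d\<close>, of k] \<open>1 < d\<close>
    by (simp add: hom_sum[symmetric])
  then show "gauss_sum d (red \<circ> \<chi>) (z ^ b) = 0"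
    using z by (intro gauss_sum_power_eq_0) (auto simp: prim_root_unity_def)
qed

text \<open>Artin's trick: the twisted relation no longer involves \<open>c j\<close>.\<close>
lemma character_relation_twist:
  fixes \<psi> :: "'i \<Rightarrow> 'm::monoid_mult \<Rightarrow> 'a::comm_ring_1"
  assumes "finite J" "j \<notin> J" and "a \<in> U" "u \<in> U" "a * u \<in> U"
    and mult: "\<And>i. i \<in> insert j J \<Longrightarrow> \<psi> i (a * u) = \<psi> i a * \<psi> i u"
    and relation: "\<And>v. v \<in> U \<Longrightarrow> (\<Sum>i\<in>insert j J. c i * \<psi> i v) = 0"
  shows "(\<Sum>i\<in>J. c i * (\<psi> i a - \<psi> j a) * \<psi> i u) = 0"
proof -
  have au: "(\<Sum>i\<in>J. c i * \<psi> i (a * u)) = - (c j * \<psi> j (a * u))"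
    using relation[OF \<open>a * u \<in> U\<close>] assms(1,2) by (simp add: add_eq_0_iff)
  have u: "(\<Sum>i\<in>J. c i * \<psi> i u) = - (c j * \<psi> j u)"
    using relation[OF \<open>u \<in> U\<close>] assms(1,2) by (simp add: add_eq_0_iff)
  have "(\<Sum>i\<in>J. c i * (\<psi> i a - \<psi> j a) * \<psi> i u)
      = (\<Sum>i\<in>J. c i * \<psi> i (a * u)) - \<psi> j a * (\<Sum>i\<in>J. c i * \<psi> i u)"
    using mult by (auto simp: algebra_simps sum_distrib_left sum_subtractf intro!: sum.cong)
  also have "\<dots> = \<psi> j a * (c j * \<psi> j u) - c j * \<psi> j (a * u)"
    unfolding au u by simp
  also have "\<dots> = 0"
    using mult by simp
  finally show ?thesis .
qed

lemma linear_independence_characters: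
  fixes \<psi> :: "'i \<Rightarrow> 'm::monoid_mult \<Rightarrow> 'a::idom"
  assumes "finite I"
    and U: "1 \<in> U" "\<And>x y. x \<in> U \<Longrightarrow> y \<in> U \<Longrightarrow> x * y \<in> U"
    and mult: "\<And>i x y. i \<in> I \<Longrightarrow> x \<in> U \<Longrightarrow> y \<in> U \<Longrightarrow> \<psi> i (x * y) = \<psi> i x * \<psi> i y"
    and one: "\<And>i. i \<in> I \<Longrightarrow> \<psi> i 1 = 1"
    and distinct: "\<And>i j. i \<in> I \<Longrightarrow> j \<in> I \<Longrightarrow> i \<noteq> j \<Longrightarrow> \<exists>a\<in>U. \<psi> i a \<noteq> \<psi> j a"
    and vanish: "\<And>u. u \<in> U \<Longrightarrow> (\<Sum>i\<in>I. c i * \<psi> i u) = 0"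
  shows "\<forall>i\<in>I. c i = 0"
proof -
  have "\<forall>c. (\<forall>u\<in>U. (\<Sum>i\<in>J. c i * \<psi> i u) = 0) \<longrightarrow> (\<forall>i\<in>J. c i = 0)" if "J \<subseteq> I" for J
    using finite_subset[OF that \<open>finite I\<close>] that
  proof (induction J rule: finite_subset_induct')
    case (insert j J)
    show ?case
    proof (intro allI impI)
      fix c
      assume "\<forall>u\<in>U. (\<Sum>i\<in>insert j J. c i * \<psi> i u) = 0"
      then have relation: "(\<Sum>i\<in>insert j J. c i * \<psi> i u) = 0" if "u \<in> U" for u
        using that by blast
      have J: "\<forall>i\<in>J. c i = 0"
      proof
        fix i
        assume "i \<in> J"
        then obtain a where a: "a \<in> U" "\<psi> i a \<noteq> \<psi> j a"
          using distinct[of i j] insert.hyps by auto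
        have "(\<Sum>i\<in>J. c i * (\<psi> i a - \<psi> j a) * \<psi> i u) = 0" if "u \<in> U" for u
          by (rule character_relation_twist[OF insert.hyps(1,4) a(1) that U(2)[OF a(1) that] _ relation])
            (use mult insert.hyps(2,3) a(1) that in auto)
        then show "c i = 0"
          using spec[OF insert.IH, of "\<lambda>i. c i * (\<psi> i a - \<psi> j a)"] \<open>i \<in> J\<close> a(2) by auto
      qed
      then have "c j * \<psi> j 1 = 0"
        using relation[OF U(1)] insert.hyps by simp
      with J show "\<forall>i\<in>insert j J. c i = 0"
        using one insert.hyps by simp
    qed
  qed simp
  then show ?thesis
    using vanish by blast
qed

section \<open>The Vandermonde matrix of the roots of unity\<close>

definition vandermonde_mat :: "'a::comm_ring_1 list \<Rightarrow> nat \<Rightarrow> 'a mat" where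
  "vandermonde_mat zs d = mat (length zs) d (\<lambda>(c, h). (zs ! c) ^ h)"

lemma vandermonde_mat_carrier: "vandermonde_mat zs d \<in> carrier_mat (length zs) d"
  by (simp add: vandermonde_mat_def)

lemma index_vandermonde_mat_mult_vec:
  assumes "c < length zs" and "x \<in> carrier_vec d"
  shows "(vandermonde_mat zs d *\<^sub>v x) $ c = (\<Sum>h<d. (zs ! c) ^ h * x $ h)"
  using assms
  by (auto simp: vandermonde_mat_def mult_mat_vec_def scalar_prod_def atLeast0LessThan intro!: sum.cong)

lemma (in vec_space) rank_eq_if_surj:
  assumes A: "A \<in> carrier_mat n nc"
    and surj: "\<And>y. y \<in> carrier_vec n \<Longrightarrow> \<exists>x\<in>carrier_vec nc. A *\<^sub>v x = y"
  shows "rank A = n"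
proof -
  have "span (set (cols A)) = carrier_vec n"
    using col_space_eq[OF A] surj A unfolding col_space_def by auto
  then have "span_vs (set (cols A)) = V"
    by simp
  then show ?thesis
    unfolding rank_def using dim_is_n by simp
qed

lemma rank_vandermonde_mat_roots_unity:
  fixes zs :: "'a::field list"
  assumes "distinct zs" and roots: "\<And>z. z \<in> set zs \<Longrightarrow> z ^ d = 1"
    and "0 < d" and d_nonzero: "of_nat d \<noteq> (0::'a)"
  shows "vec_space.rank (length zs) (vandermonde_mat zs d) = length zs"
proof (rule vec_space.rank_eq_if_surj[OF vandermonde_mat_carrier])
  fix y :: "'a vec"
  assume y: "y \<in> carrier_vec (length zs)"
  define x where
    "x = vec d (\<lambda>h. inverse (of_nat d) * (\<Sum>c<length zs. y $ c * ((zs ! c) ^ (d - 1)) ^ h))"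
  have "vandermonde_mat zs d *\<^sub>v x = y"
  proof (rule eq_vecI)
    fix c'
    assume "c' < dim_vec y"
    then have c': "c' < length zs"
      using y by simp
    have orth: "(\<Sum>h<d. (zs ! c' * (zs ! c) ^ (d - 1)) ^ h) = (if c = c' then of_nat d else 0)"
      if "c < length zs" for c
      using sum_powers_quotient_roots_unity[OF roots roots \<open>0 < d\<close>, OF nth_mem nth_mem, OF c' that]
        nth_eq_iff_index_eq[OF \<open>distinct zs\<close> c' that] by auto
    have "(vandermonde_mat zs d *\<^sub>v x) $ c'
        = inverse (of_nat d) * (\<Sum>c<length zs. y $ c * (\<Sum>h<d. (zs ! c' * (zs ! c) ^ (d - 1)) ^ h))"
      using c' unfolding index_vandermonde_mat_mult_vec[OF c' vec_carrier] x_def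
      by (simp add: sum_distrib_left sum_distrib_right power_mult_distrib ac_simps
          sum.swap[of _ "{..<d}"])
    also have "\<dots> = inverse (of_nat d) * (\<Sum>c<length zs. y $ c * (if c = c' then of_nat d else 0))"
      using orth by simp
    also have "\<dots> = y $ c'"
      using c' d_nonzero by (simp add: if_distrib sum.delta cong: if_cong)
    finally show "(vandermonde_mat zs d *\<^sub>v x) $ c' = y $ c'" .
  qed (use y in \<open>simp add: vandermonde_mat_def\<close>)
  then show "\<exists>x\<in>carrier_vec d. vandermonde_mat zs d *\<^sub>v x = y"
    unfolding x_def by auto
qed

lemma inj_on_powers_vec:
  fixes S :: "'a::idom set"
  assumes roots: "\<And>w. w \<in> S \<Longrightarrow> w ^ n = 1" and "0 < n"
  shows "inj_on (\<lambda>w. vec n (\<lambda>h. w ^ h)) S"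
proof (rule inj_onI)
  fix u w
  assume "u \<in> S" "w \<in> S" and eq: "vec n (\<lambda>h. u ^ h) = vec n (\<lambda>h. w ^ h)"
  have "u ^ (n - 1) = w ^ (n - 1)"
    using arg_cong[OF eq, of "\<lambda>v::'a vec. v $ (n - 1)"] \<open>0 < n\<close> by simp
  then have "w * u ^ (n - 1) = 1"
    using roots[OF \<open>w \<in> S\<close>] \<open>0 < n\<close> by (simp flip: power_Suc)
  then show "u = w"
    using mult_power_pred_eq_1_iff[OF roots[OF \<open>u \<in> S\<close>] \<open>0 < n\<close>] by simp
qed

lemma (in vec_space) lin_indpt_powers_vecs:
  assumes roots: "\<And>w. w \<in> S \<Longrightarrow> w ^ n = 1" and "0 < n" and n_nonzero: "of_nat n \<noteq> (0::'a)"
  shows "lin_indpt ((\<lambda>w. vec n (\<lambda>h. w ^ h)) ` S)"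
proof
  let ?v = "\<lambda>w. vec n (\<lambda>h. w ^ h)"
  assume "lin_dep (?v ` S)"
  then obtain A a v where A: "finite A" "A \<subseteq> ?v ` S" "lincomb a A = 0\<^sub>v n" "v \<in> A" "a v \<noteq> 0"
    unfolding lin_dep_def by auto
  obtain w where w: "w \<in> S" "v = ?v w"
    using A(2,4) by auto
  have "A \<subseteq> carrier_vec n"
    using A(2) by auto
  have "0 = (\<Sum>h<n. lincomb a A $ h * (w ^ h) ^ (n - 1))"
    using A(3) by simp
  also have "\<dots> = (\<Sum>x\<in>A. a x * (\<Sum>h<n. x $ h * (w ^ h) ^ (n - 1)))"
    using lincomb_index[OF _ \<open>A \<subseteq> carrier_vec n\<close>]
    by (simp add: sum_distrib_left sum_distrib_right ac_simps sum.swap[of _ "{..<n}"])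
  also have "\<dots> = (\<Sum>x\<in>A. if x = v then a v * of_nat n else 0)"
  proof (rule sum.cong[OF refl])
    fix x
    assume "x \<in> A"
    then obtain u where u: "u \<in> S" "x = ?v u"
      using A(2) by auto
    have "(\<Sum>h<n. x $ h * (w ^ h) ^ (n - 1)) = (\<Sum>h<n. (u * w ^ (n - 1)) ^ h)"
      using u by (intro sum.cong refl) (simp add: power_mult_power_power)
    also have "\<dots> = (if u = w then of_nat n else 0)"
      using sum_powers_quotient_roots_unity[OF roots roots \<open>0 < n\<close>, OF u(1) w(1)] .
    also have "u = w \<longleftrightarrow> x = v"
      using inj_on_powers_vec[OF roots \<open>0 < n\<close>] u w by (auto dest: inj_onD)
    finally show "a x * (\<Sum>h<n. x $ h * (w ^ h) ^ (n - 1)) = (if x = v then a v * of_nat n else 0)"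
      by simp
  qed
  also have "\<dots> = a v * of_nat n"
    using A(1,4) by (simp add: sum.delta)
  finally show False
    using A(5) n_nonzero by simp
qed

lemma (in vec_space) in_span_powers_vecs:
  fixes x :: "'a vec" and z :: 'a
  assumes z: "prim_root_unity n z" and "0 < n" and n_nonzero: "of_nat n \<noteq> (0::'a)"
    and S: "S \<subseteq> {w. w ^ n = 1}" and x: "x \<in> carrier_vec n"
    and vanish: "\<And>w. w ^ n = 1 \<Longrightarrow> w \<notin> S \<Longrightarrow> (\<Sum>k<n. x $ k * (w ^ k) ^ (n - 1)) = 0"
  shows "x \<in> span ((\<lambda>w. vec n (\<lambda>h. w ^ h)) ` S)"
proof -
  let ?v = "\<lambda>w. vec n (\<lambda>h. w ^ h)"
  define f where "f w = inverse (of_nat n) * (\<Sum>k<n. x $ k * (w ^ k) ^ (n - 1))" for w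
  have inj: "inj_on ?v S"
    using inj_on_powers_vec[of S n] S \<open>0 < n\<close> by auto
  have fin: "finite {w::'a. w ^ n = 1}"
    using card_roots_unity_le(1)[OF \<open>0 < n\<close>] .
  then have "finite S"
    using S by (rule finite_subset[rotated])
  have vecs: "?v ` S \<subseteq> carrier_vec n"
    by auto
  have "lincomb (f \<circ> the_inv_into S ?v) (?v ` S) = x"
  proof (rule eq_vecI)
    fix h
    assume "h < dim_vec x"
    then have "h < n"
      using x by simp
    have "lincomb (f \<circ> the_inv_into S ?v) (?v ` S) $ h
        = (\<Sum>v\<in>?v ` S. (f \<circ> the_inv_into S ?v) v * v $ h)"
      by (rule lincomb_index[OF \<open>h < n\<close> vecs])
    also have "\<dots> = (\<Sum>w\<in>S. f w * w ^ h)"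
      using \<open>h < n\<close> by (auto simp: sum.reindex[OF inj] the_inv_into_f_f[OF inj] intro!: sum.cong)
    also have "\<dots> = (\<Sum>w | w ^ n = 1. f w * w ^ h)"
      using fin S vanish unfolding f_def by (intro sum.mono_neutral_left) auto
    also have "\<dots> = x $ h"
      using fourier_inversion_roots_unity[OF z \<open>0 < n\<close> n_nonzero \<open>h < n\<close>, of "\<lambda>k. x $ k"]
      unfolding f_def .
    finally show "lincomb (f \<circ> the_inv_into S ?v) (?v ` S) $ h = x $ h" .
  qed (use x lincomb_dim[OF finite_imageI[OF \<open>finite S\<close>] vecs] in simp)
  with \<open>finite S\<close> show ?thesis
    unfolding span_def by force
qed

lemma powers_vec_in_mat_kernel_vandermonde:
  fixes zs :: "'a::idom list"
  assumes zs: "\<And>z. z \<in> set zs \<Longrightarrow> prim_root_unity d z" and "0 < d"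
    and w: "w ^ d = 1" "\<not> prim_root_unity d w"
  shows "vec d (\<lambda>h. w ^ h) \<in> mat_kernel (vandermonde_mat zs d)"
proof -
  have "(vandermonde_mat zs d *\<^sub>v vec d (\<lambda>h. w ^ h)) $ c = 0" if c: "c < length zs" for c
  proof -
    have \<zeta>: "prim_root_unity d (zs ! c)"
      using zs nth_mem[OF c] by blast
    then have "zs ! c * w \<noteq> 1"
      using prim_root_unity_inverse[OF _ \<open>0 < d\<close>] w(2) by blast
    moreover have "(zs ! c * w) ^ d = 1"
      using \<zeta> w(1) unfolding prim_root_unity_def by (simp add: power_mult_distrib)
    ultimately show ?thesis
      using sum_powers_root_unity[of "zs ! c * w" d] c
      by (simp add: index_vandermonde_mat_mult_vec power_mult_distrib)
  qed
  then have "vandermonde_mat zs d *\<^sub>v vec d (\<lambda>h. w ^ h) = 0\<^sub>v (length zs)"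
    by (intro eq_vecI) (simp_all add: vandermonde_mat_def)
  then show ?thesis
    using vandermonde_mat_carrier by (intro mat_kernelI) auto
qed

lemma fourier_coeff_eq_0_mat_kernel_vandermonde:
  fixes zs :: "'a::comm_ring_1 list" and x :: "'a vec" and w :: 'a
  assumes zs: "{z. prim_root_unity d z} \<subseteq> set zs" and "0 < d"
    and x: "x \<in> mat_kernel (vandermonde_mat zs d)" and w: "prim_root_unity d w"
  shows "(\<Sum>k<d. x $ k * (w ^ k) ^ (d - 1)) = 0"
proof -
  have x: "x \<in> carrier_vec d" "vandermonde_mat zs d *\<^sub>v x = 0\<^sub>v (length zs)"
    using mat_kernelD[OF vandermonde_mat_carrier x] by auto
  have "prim_root_unity d (w ^ (d - 1))"
    using w prim_root_unity_power_iff[OF _ \<open>0 < d\<close>] coprime_diff_one_left_nat[OF \<open>0 < d\<close>] by blast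
  then obtain c where c: "c < length zs" "zs ! c = w ^ (d - 1)"
    using zs by (metis in_set_conv_nth mem_Collect_eq subsetD)
  have "(\<Sum>k<d. x $ k * (w ^ k) ^ (d - 1)) = (vandermonde_mat zs d *\<^sub>v x) $ c"
    using c by (simp add: index_vandermonde_mat_mult_vec[OF c(1) x(1)] ac_simps flip: power_mult)
  then show ?thesis
    using x(2) c(1) by simp
qed

lemma basis_mat_kernel_vandermonde_prim_roots:
  fixes zs :: "'a::field list" and z :: 'a
  assumes zs: "set zs = {z. prim_root_unity d z}" and z: "prim_root_unity d z" and "0 < d"
    and d_nonzero: "of_nat d \<noteq> (0::'a)"
  shows "vectorspace.basis class_ring
      ((module_vec TYPE('a) d)\<lparr>carrier := mat_kernel (vandermonde_mat zs d)\<rparr>)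
      {vec d (\<lambda>h. w ^ h) | w. w ^ d = 1 \<and> \<not> prim_root_unity d w}"
proof -
  define S where "S = {w::'a. w ^ d = 1 \<and> \<not> prim_root_unity d w}"
  have N: "{vec d (\<lambda>h. w ^ h) | w. w ^ d = 1 \<and> \<not> prim_root_unity d w} = (\<lambda>w. vec d (\<lambda>h. w ^ h)) ` S"
    unfolding S_def by blast
  interpret K: kernel "length zs" d "vandermonde_mat zs d"
    by unfold_locales (rule vandermonde_mat_carrier)
  have kernel: "(\<lambda>w. vec d (\<lambda>h. w ^ h)) ` S \<subseteq> mat_kernel (vandermonde_mat zs d)"
    using powers_vec_in_mat_kernel_vandermonde[OF _ \<open>0 < d\<close>] zs unfolding S_def by auto
  have "x \<in> K.NC.span ((\<lambda>w. vec d (\<lambda>h. w ^ h)) ` S)" if x: "x \<in> mat_kernel (vandermonde_mat zs d)" for x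
    using fourier_coeff_eq_0_mat_kernel_vandermonde[OF _ \<open>0 < d\<close> x] zs mat_kernelD(1)[OF K.A x]
    by (intro K.NC.in_span_powers_vecs[OF z \<open>0 < d\<close> d_nonzero]) (auto simp: S_def)
  moreover have "K.NC.lin_indpt ((\<lambda>w. vec d (\<lambda>h. w ^ h)) ` S)"
    by (rule K.NC.lin_indpt_powers_vecs[OF _ \<open>0 < d\<close> d_nonzero]) (simp add: S_def)
  ultimately show ?thesis
    unfolding N K.Ker.basis_def
    using kernel K.lindep_same K.span_same K.Ker.span_is_subset2 by auto
qed

lemma index_vandermonde_mat_mult_mat_vec:
  fixes f :: "nat \<Rightarrow> nat \<Rightarrow> 'a::comm_ring_1"
  assumes x: "x \<in> carrier_vec n" and c: "c < length zs"
  shows "(vandermonde_mat zs d * mat d n (\<lambda>(h, i). f i h) *\<^sub>v x) $ c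
    = (\<Sum>i<n. x $ i * gauss_sum d (f i) (zs ! c))"
proof -
  define E where "E = mat d n (\<lambda>(h, i). f i h)"
  have E: "E \<in> carrier_mat d n"
    by (simp add: E_def)
  have Ex: "(E *\<^sub>v x) $ h = (\<Sum>i<n. f i h * x $ i)" if "h < d" for h
    using that x unfolding E_def
    by (auto simp: mult_mat_vec_def scalar_prod_def atLeast0LessThan intro!: sum.cong)
  have "(vandermonde_mat zs d * E *\<^sub>v x) $ c = (vandermonde_mat zs d *\<^sub>v (E *\<^sub>v x)) $ c"
    using assoc_mult_mat_vec[OF vandermonde_mat_carrier E x] by simp
  also have "\<dots> = (\<Sum>h<d. (zs ! c) ^ h * (E *\<^sub>v x) $ h)"
    using c E x by (intro index_vandermonde_mat_mult_vec) auto
  also have "\<dots> = (\<Sum>h<d. (zs ! c) ^ h * (\<Sum>i<n. f i h * x $ i))"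
    by (intro sum.cong refl) (simp add: Ex)
  finally show ?thesis
    unfolding E_def
    by (simp add: gauss_sum_def sum_distrib_left sum_distrib_right ac_simps sum.swap[of _ "{..<d}"])
qed

lemma mat_kernel_vandermonde_mult_char_mat:
  fixes zs :: "'a::field list" and z :: 'a and \<chi> :: "nat \<Rightarrow> nat \<Rightarrow> 'o::idom"
    and red :: "'o \<Rightarrow> 'a"
  assumes hom: "comm_ring_hom red"
    and zs: "set zs = {z. prim_root_unity d z}" and z: "prim_root_unity d z" and "1 < d"
    and d_nonzero: "of_nat d \<noteq> (0::'a)"
    and chars: "\<And>i. i < n \<Longrightarrow> dirichlet_char d (\<chi> i)"
    and primitive: "\<And>i. i < n \<Longrightarrow> conductor d (\<chi> i) = d"
    and distinct: "\<And>i i'. i < n \<Longrightarrow> i' < n \<Longrightarrow> i \<noteq> i' \<Longrightarrow>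
        \<exists>a<d. coprime a d \<and> red (\<chi> i a) \<noteq> red (\<chi> i' a)"
  shows "mat_kernel (vandermonde_mat zs d * mat d n (\<lambda>(h, i). red (\<chi> i h))) = {0\<^sub>v n}"
proof -
  interpret comm_ring_hom red by fact
  define B where "B = vandermonde_mat zs d * mat d n (\<lambda>(h, i). (red \<circ> \<chi> i) h)"
  define G where "G i = gauss_sum d (red \<circ> \<chi> i) z" for i
  have "0 < d"
    using \<open>1 < d\<close> by simp
  have B: "B \<in> carrier_mat (length zs) n"
    unfolding B_def by (rule mult_carrier_mat[OF vandermonde_mat_carrier]) simp
  have relation: "(\<Sum>i<n. x $ i * G i * red (\<chi> i u)) = 0"
    if x: "x \<in> mat_kernel B" and u: "coprime u d" for x :: "'a vec" and u
  proof -
    obtain b where "[u * b = 1] (mod d)"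
      using cong_solve_coprime_nat[OF u] by auto
    then have ub: "[u * (b mod d) = 1] (mod d)"
      by (simp add: cong_def mod_mult_right_eq)
    then have "coprime (b mod d) d"
      by (metis cong_imp_coprime cong_sym coprime_1_left coprime_mult_left_iff)
    then have "prim_root_unity d (z ^ (b mod d))"
      using prim_root_unity_power_iff[OF z \<open>0 < d\<close>] by simp
    then obtain c where c: "c < length zs" "zs ! c = z ^ (b mod d)"
      using zs by (metis in_set_conv_nth mem_Collect_eq)
    have "gauss_sum d (red \<circ> \<chi> i) (zs ! c) = red (\<chi> i u) * G i" if "i < n" for i
      using gauss_sum_power_coprime[OF dirichlet_char_comp_hom[OF chars[OF that] hom] ub] z c(2)
      unfolding G_def prim_root_unity_def by simp
    moreover have "(B *\<^sub>v x) $ c = 0"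
      using mat_kernelD[OF B x] c(1) by simp
    ultimately show ?thesis
      using index_vandermonde_mat_mult_mat_vec[where f = "\<lambda>i. red \<circ> \<chi> i", OF mat_kernelD(1)[OF B x] c(1)]
      unfolding B_def by (simp add: ac_simps)
  qed
  have "x = 0\<^sub>v n" if x: "x \<in> mat_kernel B" for x
  proof -
    have "\<forall>i\<in>{..<n}. x $ i * G i = 0"
    proof (rule linear_independence_characters[of "{..<n}" "{u. coprime u d}" "\<lambda>i u. red (\<chi> i u)"])
      show "\<And>i a b. i \<in> {..<n} \<Longrightarrow> a \<in> {u. coprime u d} \<Longrightarrow> b \<in> {u. coprime u d} \<Longrightarrow>
          red (\<chi> i (a * b)) = red (\<chi> i a) * red (\<chi> i b)"
        using dirichlet_charD(3)[OF chars] by (simp add: hom_mult)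
      show "\<And>i j. i \<in> {..<n} \<Longrightarrow> j \<in> {..<n} \<Longrightarrow> i \<noteq> j \<Longrightarrow>
          \<exists>a\<in>{u. coprime u d}. red (\<chi> i a) \<noteq> red (\<chi> j a)"
        using distinct by fastforce
    qed (use relation[OF x] dirichlet_charD(2)[OF chars] in auto)
    then show "x = 0\<^sub>v n"
      using gauss_sum_char_hom_nonzero[OF hom chars primitive z \<open>1 < d\<close> d_nonzero]
        mat_kernelD(1)[OF B x] unfolding G_def by (intro eq_vecI) auto
  qed
  moreover have "0\<^sub>v n \<in> mat_kernel B"
    using B by (intro mat_kernelI) (auto intro!: eq_vecI simp: scalar_prod_def)
  ultimately show ?thesis
    unfolding B_def o_def by blast
qed

theorem lemma4:
  fixes d n :: nat
    and zs :: "'p :: prime_card mod_ring alg_closure list"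
    and \<chi> :: "nat \<Rightarrow> nat \<Rightarrow> 'o :: {idom, ring_char_0}"
    and red :: "'o \<Rightarrow> 'p mod_ring alg_closure"
    and C E B :: "'p mod_ring alg_closure mat"
  assumes p_odd: "odd CARD('p)"
    and d_ge: "d \<ge> 2"
    and p_ndvd: "\<not> CARD('p) dvd d"
    and zs_distinct: "distinct zs"
    and zs_set: "set zs = {z. prim_root_unity d z}"
    and C_def: "C = mat (length zs) d (\<lambda>(c, h). (zs ! c) ^ h)"
    and chars: "\<And>i. i < n \<Longrightarrow> dirichlet_char d (\<chi> i)"
    and cond: "\<And>i. i < n \<Longrightarrow> conductor d (\<chi> i) = d"
    and red_1: "red 1 = 1"
    and red_add: "\<And>x y. red (x + y) = red x + red y"
    and red_mult: "\<And>x y. red (x * y) = red x * red y"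
    and distinct_mod: "\<And>i i'. i < n \<Longrightarrow> i' < n \<Longrightarrow> i \<noteq> i' \<Longrightarrow>
        \<exists>a<d. coprime a d \<and> red (\<chi> i a) \<noteq> red (\<chi> i' a)"
    and E_def: "E = mat d n (\<lambda>(h, i). red (\<chi> i h))"
    and B_def: "B = C * E"
  shows "vec_space.rank (length zs) C = totient d
    \<and> vectorspace.basis class_ring
           ((module_vec TYPE('p mod_ring alg_closure) d)\<lparr>carrier := mat_kernel C\<rparr>)
           {vec d (\<lambda>h. z ^ h) | z. z ^ d = 1 \<and> \<not> prim_root_unity d z}
    \<and> mat_kernel B = {0\<^sub>v n}"
proof -
  have "0 < d" "1 < d"
    using d_ge by simp_all
  have d_nonzero: "(of_nat d :: 'p mod_ring alg_closure) \<noteq> 0"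
    using p_ndvd by (simp add: of_nat_eq_0_iff_char_dvd)
  obtain z :: "'p mod_ring alg_closure" where z: "prim_root_unity d z"
    using exists_prim_root_unity[OF \<open>0 < d\<close> d_nonzero] by blast
  have C: "C = vandermonde_mat zs d"
    unfolding C_def vandermonde_mat_def ..
  have "vec_space.rank (length zs) C = length zs"
    unfolding C using rank_vandermonde_mat_roots_unity[OF zs_distinct _ \<open>0 < d\<close> d_nonzero] zs_set
    by (simp add: prim_root_unity_def)
  also have "\<dots> = totient d"
    using distinct_card[OF zs_distinct] card_prim_roots_unity[OF z \<open>0 < d\<close>] zs_set by metis
  finally have "vec_space.rank (length zs) C = totient d" .
  moreover have "mat_kernel B = {0\<^sub>v n}"
    unfolding B_def C E_def
    using mat_kernel_vandermonde_mult_char_mat[OF comm_ring_homI[OF red_1 red_add red_mult] zs_set z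
        \<open>1 < d\<close> d_nonzero chars cond distinct_mod] .
  ultimately show ?thesis
    using basis_mat_kernel_vandermonde_prim_roots[OF zs_set z \<open>0 < d\<close> d_nonzero] unfolding C by blast
qed

end
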